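(* Let $A,B$ be abstract state spaces and let $\omega\in A\otimes_{\max}B$ be a bipartite state. Then $\omega$ is steering for its $B$-marginal $\omega^B$ if and only if the restriction $\hat\omega:[0,u_A]\to[0,\omega^B]$ is a strong quotient map of ordered sets.
   Context: An abstract state space is a pair $(A,u_A)$ where $A$ is a finite-dimensional real vector space with a closed, pointed, generating convex cone $A_+$, and $u_A$ is an interior point of the dual cone $A^*_+$. For $x\le y$ in an ordered vector space, $[x,y]=\{z: x\le z\le y\}$; thus $[0,u_A]\subseteq A^*$ is the set of effects. An observable on $A$ is a finite family of effects summing to $u_A$. $A\otimes_{\max}B$ is the space of bilinear forms on $A^*\times B^*$ nonnegative on $A^*_+\times B^*_+$ (every bipartite composite state lies in it); a state is such a form with $\omega(u_A,u_B)=1$; $\hat\omega:A^*\to B$ is $\hat\omega(a)(b)=\omega(a,b)$, and $\omega^B=\hat\omega(u_A)$. An ensemble for $\beta\in B_+$ is a finite family $\beta_i\in B_+$ with $\sum_i\beta_i=\beta$. $\omega$ is steering for its $B$-marginal if for every ensemble $\{\beta_i\}$ for $\omega^B$ there is an observable $\{x_i\}$ on $A$ with $\hat\omega(x_i)=\beta_i$ for all $i$. For partially ordered sets $X,Y$, an order-preserving surjection $p:X\to Y$ is a strong quotient map if every finite chain $y_1\le y_2\le\cdots\le y_n$ in $Y$ is the image of some chain $x_1\le x_2\le\cdots\le x_n$ in $X$, i.e., $y_i=p(x_i)$ for all $i$. *)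

theory Defs
  imports "HOL-Analysis.Analysis"
begin

text \<open>A finite-dimensional real vector space is modelled by a type of class
  euclidean_space. Its dual space is identified with the same type via the inner product:
  the vector f represents the functional (\<lambda>x. f \<bullet> x). Consequently the double dual is
  again the type itself.\<close>

definition dual_cone :: "'a::euclidean_space set \<Rightarrow> 'a set" where
  "dual_cone C = {f. \<forall>x\<in>C. 0 \<le> f \<bullet> x}"

definition pointed_cone :: "'a::real_vector set \<Rightarrow> bool" where
  "pointed_cone C \<longleftrightarrow> C \<inter> uminus ` C = {0}"

definition generating_cone :: "'a::real_vector set \<Rightarrow> bool" where
  "generating_cone C \<longleftrightarrow> {x - y | x y. x \<in> C \<and> y \<in> C} = UNIV"

definition abstract_state_space :: "'a::euclidean_space set \<Rightarrow> 'a \<Rightarrow> bool" where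
  "abstract_state_space Cp u \<longleftrightarrow>
     convex_cone Cp \<and> closed Cp \<and> pointed_cone Cp \<and> generating_cone Cp \<and>
     u \<in> interior (dual_cone Cp)"

definition order_interval :: "'a::real_vector set \<Rightarrow> 'a \<Rightarrow> 'a \<Rightarrow> 'a set" where
  "order_interval P x y = {z. z - x \<in> P \<and> y - z \<in> P}"

definition cone_le :: "'a::real_vector set \<Rightarrow> 'a \<Rightarrow> 'a \<Rightarrow> bool" where
  "cone_le P x y \<longleftrightarrow> y - x \<in> P"

definition max_tensor ::
  "'a::euclidean_space set \<Rightarrow> 'b::euclidean_space set \<Rightarrow> ('a \<Rightarrow> 'b \<Rightarrow> real) set" where
  "max_tensor Ap Bp = {\<omega>. bilinear \<omega> \<and>
      (\<forall>a\<in>dual_cone Ap. \<forall>b\<in>dual_cone Bp. 0 \<le> \<omega> a b)}"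

definition bipartite_state ::
  "'a::euclidean_space set \<Rightarrow> 'a \<Rightarrow> 'b::euclidean_space set \<Rightarrow> 'b \<Rightarrow> ('a \<Rightarrow> 'b \<Rightarrow> real) \<Rightarrow> bool" where
  "bipartite_state Ap uA Bp uB \<omega> \<longleftrightarrow> \<omega> \<in> max_tensor Ap Bp \<and> \<omega> uA uB = 1"

text \<open>\<omega>hat : A^* \<rightarrow> B, \<omega>hat(a)(b) = \<omega>(a,b); the element of B representing the functional \<omega> a
  on B^* (= the type 'b via inner product).\<close>
definition omega_hat :: "('a \<Rightarrow> 'b::euclidean_space \<Rightarrow> real) \<Rightarrow> 'a \<Rightarrow> 'b" where
  "omega_hat \<omega> a = (\<Sum>i\<in>Basis. \<omega> a i *\<^sub>R i)"

definition marginal_B :: "('a \<Rightarrow> 'b::euclidean_space \<Rightarrow> real) \<Rightarrow> 'a \<Rightarrow> 'b" where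
  "marginal_B \<omega> uA = omega_hat \<omega> uA"

definition observable :: "'a::euclidean_space set \<Rightarrow> 'a \<Rightarrow> nat \<Rightarrow> (nat \<Rightarrow> 'a) \<Rightarrow> bool" where
  "observable Ap uA n x \<longleftrightarrow>
     (\<forall>i<n. x i \<in> order_interval (dual_cone Ap) 0 uA) \<and> (\<Sum>i<n. x i) = uA"

definition ensemble :: "'b::real_vector set \<Rightarrow> 'b \<Rightarrow> nat \<Rightarrow> (nat \<Rightarrow> 'b) \<Rightarrow> bool" where
  "ensemble Bp \<beta> n bs \<longleftrightarrow> (\<forall>i<n. bs i \<in> Bp) \<and> (\<Sum>i<n. bs i) = \<beta>"

definition steering ::
  "'a::euclidean_space set \<Rightarrow> 'a \<Rightarrow> 'b::euclidean_space set \<Rightarrow> ('a \<Rightarrow> 'b \<Rightarrow> real) \<Rightarrow> bool" where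
  "steering Ap uA Bp \<omega> \<longleftrightarrow>
     (\<forall>n bs. ensemble Bp (marginal_B \<omega> uA) n bs \<longrightarrow>
        (\<exists>x. observable Ap uA n x \<and> (\<forall>i<n. omega_hat \<omega> (x i) = bs i)))"

definition strong_quotient_map ::
  "'x set \<Rightarrow> ('x \<Rightarrow> 'x \<Rightarrow> bool) \<Rightarrow> 'y set \<Rightarrow> ('y \<Rightarrow> 'y \<Rightarrow> bool) \<Rightarrow> ('x \<Rightarrow> 'y) \<Rightarrow> bool" where
  "strong_quotient_map X leX Y leY p \<longleftrightarrow>
     p ` X = Y \<and>
     (\<forall>x1\<in>X. \<forall>x2\<in>X. leX x1 x2 \<longrightarrow> leY (p x1) (p x2)) \<and>
     (\<forall>ys. set ys \<subseteq> Y \<and> successively leY ys \<longrightarrow>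
        (\<exists>xs. set xs \<subseteq> X \<and> successively leX xs \<and> map p xs = ys))"

end

theory Submission
  imports Defs
begin

text \<open>A decomposition \<beta> = \<beta>_1 + \<dots> + \<beta>_n of the marginal into positive parts is the same thing
  as the chain of its partial sums 0 \<le> \<beta>_1 \<le> \<beta>_1 + \<beta>_2 \<le> \<dots> \<le> \<beta>, and an observable is likewise the
  same thing as a chain of effects 0 \<le> x_1 \<le> \<dots> \<le> u_A. Since \<omega>hat is linear it maps partial sums
  to partial sums, so lifting ensembles to observables is equivalent to lifting chains in
  [0, \<omega>^B] to chains in [0, u_A]. By the bipolar theorem for the closed cone B_+, \<omega>hat is positive,
  hence order preserving on the intervals, and lifting one-element chains gives surjectivity.\<close>

lemma dual_cone_dual_cone:
  fixes C :: "'a::euclidean_space set"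
  assumes cone: "convex_cone C" and "closed C"
  shows "dual_cone (dual_cone C) = C"
proof
  show "C \<subseteq> dual_cone (dual_cone C)"
    by (auto simp: dual_cone_def inner_commute)
  show "dual_cone (dual_cone C) \<subseteq> C"
  proof
    fix z assume z: "z \<in> dual_cone (dual_cone C)"
    show "z \<in> C"
    proof (rule ccontr)
      assume "z \<notin> C"
      then obtain a b where sep: "a \<bullet> z < b" "\<forall>x\<in>C. b < a \<bullet> x"
        using separating_hyperplane_closed_point[of C z] assms
        unfolding convex_cone_def by blast
      then have "b < 0"
        using convex_cone_contains_0[OF cone] by force
      have "a \<in> dual_cone C"
        unfolding dual_cone_def
      proof (intro CollectI ballI)
        fix x assume x: "x \<in> C"
        show "0 \<le> a \<bullet> x"
        proof (rule ccontr)
          assume neg: "\<not> 0 \<le> a \<bullet> x"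
          \<comment> \<open>scaling x inside the cone pushes a \<bullet> x below the bound b\<close>
          define c where "c = 2 * b / (a \<bullet> x)"
          have "c *\<^sub>R x \<in> C"
            using neg \<open>b < 0\<close> x
            by (intro convex_cone_scaleR[OF cone]) (simp_all add: c_def divide_nonpos_neg)
          moreover have "a \<bullet> (c *\<^sub>R x) = 2 * b"
            using neg by (simp add: c_def)
          ultimately show False
            using sep \<open>b < 0\<close> by force
        qed
      qed
      then show False
        using z sep \<open>b < 0\<close> by (force simp: dual_cone_def inner_commute)
    qed
  qed
qed

lemma inner_omega_hat:
  assumes "bilinear \<omega>"
  shows "omega_hat \<omega> a \<bullet> b = \<omega> a b"
proof -
  have "\<omega> a b = \<omega> a (\<Sum>i\<in>Basis. (b \<bullet> i) *\<^sub>R i)"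
    by (simp add: euclidean_representation)
  also have "\<dots> = (\<Sum>i\<in>Basis. (b \<bullet> i) * \<omega> a i)"
    using assms by (simp add: bilinear_def linear_sum linear_scale)
  also have "\<dots> = omega_hat \<omega> a \<bullet> b"
    unfolding omega_hat_def by (simp add: inner_sum_right inner_commute mult.commute)
  finally show ?thesis ..
qed

lemma linear_omega_hat:
  assumes "bilinear \<omega>"
  shows "linear (omega_hat \<omega>)"
proof (rule linearI)
  show "omega_hat \<omega> (x + y) = omega_hat \<omega> x + omega_hat \<omega> y" for x y
    unfolding omega_hat_def using bilinear_ladd[OF assms]
    by (simp add: scaleR_add_left sum.distrib)
  show "omega_hat \<omega> (c *\<^sub>R x) = c *\<^sub>R omega_hat \<omega> x" for c x
    unfolding omega_hat_def using bilinear_lmul[OF assms]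
    by (simp add: scaleR_sum_right)
qed

lemma omega_hat_mem_cone:
  assumes "\<omega> \<in> max_tensor Ap Bp" "convex_cone Bp" "closed Bp" "a \<in> dual_cone Ap"
  shows "omega_hat \<omega> a \<in> Bp"
proof -
  have "0 \<le> omega_hat \<omega> a \<bullet> f" if "f \<in> dual_cone Bp" for f
    using assms(1,4) that by (simp add: max_tensor_def inner_omega_hat)
  then have "omega_hat \<omega> a \<in> dual_cone (dual_cone Bp)"
    by (simp add: dual_cone_def)
  then show ?thesis
    using dual_cone_dual_cone[OF assms(2,3)] by simp
qed

lemma convex_cone_dual_cone: "convex_cone (dual_cone C)"
  unfolding convex_cone_iff dual_cone_def by (auto simp: inner_add_left)

lemma convex_cone_sum:
  assumes "convex_cone C" "\<And>i. i \<in> I \<Longrightarrow> f i \<in> C"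
  shows "sum f I \<in> C"
  using assms(2)
  by (induction I rule: infinite_finite_induct)
     (auto simp: convex_cone_contains_0[OF assms(1)] intro: convex_cone_add[OF assms(1)])

lemma sum_lessThan_diff_mem_convex_cone:
  fixes n k :: nat
  assumes "convex_cone C" "\<And>i. i < n \<Longrightarrow> x i \<in> C" "k \<le> n"
  shows "sum x {..<n} - sum x {..<k} \<in> C"
proof -
  have "sum x {..<n} - sum x {..<k} = sum x ({..<n} - {..<k})"
    using assms(3) by (intro sum_diff[symmetric]) auto
  then show ?thesis
    using assms(1,2) by (auto intro: convex_cone_sum)
qed

lemma summand_mem_order_interval:
  fixes n :: nat
  assumes "convex_cone C" "\<And>i. i < n \<Longrightarrow> x i \<in> C" "sum x {..<n} = u" "i < n"
  shows "x i \<in> order_interval C 0 u"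
proof -
  have "u - x i = sum x ({..<n} - {i})"
    using assms(3,4) by (subst sum_diff1) auto
  then have "u - x i \<in> C"
    using assms(1,2) by (auto intro: convex_cone_sum)
  then show ?thesis
    using assms(2,4) by (simp add: order_interval_def)
qed

text \<open>partial_sums x m is the chain x 0, x 0 + x 1, \<dots>, x 0 + \<dots> + x (m - 1) of the
  decomposition x 0, \<dots>, x m, omitting the total; conversely chain_increments ys v is the
  decomposition of v given by the consecutive differences of 0, ys, v.\<close>

definition partial_sums :: "(nat \<Rightarrow> 'a::comm_monoid_add) \<Rightarrow> nat \<Rightarrow> 'a list" where
  "partial_sums x m = map (\<lambda>k. sum x {..<k}) [1..<Suc m]"

definition chain_increments :: "'a::ab_group_add list \<Rightarrow> 'a \<Rightarrow> nat \<Rightarrow> 'a" where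
  "chain_increments ys v i = (0 # ys @ [v]) ! Suc i - (0 # ys @ [v]) ! i"

lemma length_partial_sums [simp]: "length (partial_sums x m) = m"
  by (simp add: partial_sums_def)

lemma nth_partial_sums: "j < m \<Longrightarrow> partial_sums x m ! j = sum x {..<Suc j}"
  by (simp add: partial_sums_def nth_upt del: upt_Suc)

lemma Cons_partial_sums_append:
  "0 # partial_sums x m @ [sum x {..<Suc m}] = map (\<lambda>k. sum x {..<k}) [0..<Suc (Suc m)]"
  by (simp add: partial_sums_def upt_rec[of 0] del: sum.lessThan_Suc)

lemma partial_sums_cong:
  "(\<And>i. i < m \<Longrightarrow> x i = y i) \<Longrightarrow> partial_sums x m = partial_sums y m"
  by (auto simp: partial_sums_def intro!: sum.cong)

lemma map_linear_partial_sums: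
  "linear p \<Longrightarrow> map p (partial_sums x m) = partial_sums (\<lambda>i. p (x i)) m"
  by (simp add: partial_sums_def linear_sum)

lemma sum_chain_increments:
  "k \<le> Suc (length ys) \<Longrightarrow> sum (chain_increments ys v) {..<k} = (0 # ys @ [v]) ! k"
  unfolding chain_increments_def sum_lessThan_telescope by simp

lemma partial_sums_chain_increments: "partial_sums (chain_increments ys v) (length ys) = ys"
proof (rule nth_equalityI)
  fix j assume "j < length (partial_sums (chain_increments ys v) (length ys))"
  then show "partial_sums (chain_increments ys v) (length ys) ! j = ys ! j"
    by (simp add: nth_partial_sums sum_chain_increments nth_append del: sum.lessThan_Suc)
qed simp

lemma chain_increments_partial_sums:
  "i < Suc m \<Longrightarrow> chain_increments (partial_sums x m) (sum x {..<Suc m}) i = x i"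
  unfolding chain_increments_def Cons_partial_sums_append
  by (simp del: upt_Suc add: nth_map_upt)

lemma linear_chain_increments:
  assumes "linear p" "i < Suc (length ys)"
  shows "p (chain_increments ys v i) = chain_increments (map p ys) (p v) i"
proof -
  have map_chain: "map p (0 # ys @ [v]) = 0 # map p ys @ [p v]"
    using linear_0[OF assms(1)] by simp
  have nth_chain: "p ((0 # ys @ [v]) ! k) = (0 # map p ys @ [p v]) ! k"
    if "k < length (0 # ys @ [v])" for k
    using nth_map[OF that, of p] unfolding map_chain ..
  show ?thesis
    unfolding chain_increments_def linear_diff[OF assms(1)]
    by (subst (1 2) nth_chain) (use assms(2) in simp_all)
qed

lemma partial_sums_chain:
  assumes "convex_cone C" "\<And>i. i < Suc m \<Longrightarrow> x i \<in> C"
  shows "set (partial_sums x m) \<subseteq> order_interval C 0 (sum x {..<Suc m})"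
    and "successively (cone_le C) (partial_sums x m)"
proof -
  show "set (partial_sums x m) \<subseteq> order_interval C 0 (sum x {..<Suc m})"
  proof
    fix y assume "y \<in> set (partial_sums x m)"
    then obtain k where k: "k < Suc m" "y = sum x {..<k}"
      by (auto simp: partial_sums_def simp del: upt_Suc)
    then show "y \<in> order_interval C 0 (sum x {..<Suc m})"
      using assms convex_cone_sum[OF assms(1), of "{..<k}" x]
        sum_lessThan_diff_mem_convex_cone[OF assms(1), where n="Suc m" and k=k]
      by (simp add: order_interval_def del: sum.lessThan_Suc)
  qed
  show "successively (cone_le C) (partial_sums x m)"
    using assms(2) by (auto simp: successively_conv_nth nth_partial_sums cone_le_def)
qed

lemma chain_increments_mem:
  assumes "set ys \<subseteq> order_interval C 0 v" "successively (cone_le C) ys" "v \<in> C"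
    and "i < Suc (length ys)"
  shows "chain_increments ys v i \<in> C"
proof -
  have "successively (cone_le C) (0 # ys @ [v])"
  proof (cases "ys = []")
    case True
    with assms(3) show ?thesis by (simp add: cone_le_def)
  next
    case False
    then have "hd ys \<in> order_interval C 0 v" "last ys \<in> order_interval C 0 v"
      using assms(1) by auto
    with False assms(2) show ?thesis
      by (simp add: successively_Cons successively_append_iff cone_le_def order_interval_def)
  qed
  then show ?thesis
    using successively_nth[of "cone_le C" "0 # ys @ [v]" i] assms(4)
    by (simp add: chain_increments_def cone_le_def)
qed

definition lifts_chains ::
  "'x set \<Rightarrow> ('x \<Rightarrow> 'x \<Rightarrow> bool) \<Rightarrow> 'y set \<Rightarrow> ('y \<Rightarrow> 'y \<Rightarrow> bool) \<Rightarrow> ('x \<Rightarrow> 'y) \<Rightarrow> bool" where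
  "lifts_chains X leX Y leY p \<longleftrightarrow>
     (\<forall>ys. set ys \<subseteq> Y \<and> successively leY ys \<longrightarrow>
        (\<exists>xs. set xs \<subseteq> X \<and> successively leX xs \<and> map p xs = ys))"

lemma strong_quotient_map_conv_lifts_chains:
  "strong_quotient_map X leX Y leY p \<longleftrightarrow>
     p ` X = Y \<and> (\<forall>x1\<in>X. \<forall>x2\<in>X. leX x1 x2 \<longrightarrow> leY (p x1) (p x2)) \<and>
     lifts_chains X leX Y leY p"
  by (simp only: strong_quotient_map_def lifts_chains_def)

lemma strong_quotient_map_iff_lifts_chains:
  assumes "p ` X \<subseteq> Y" "\<And>x1 x2. x1 \<in> X \<Longrightarrow> x2 \<in> X \<Longrightarrow> leX x1 x2 \<Longrightarrow> leY (p x1) (p x2)"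
  shows "strong_quotient_map X leX Y leY p \<longleftrightarrow> lifts_chains X leX Y leY p"
proof
  assume lift: "lifts_chains X leX Y leY p"
  have "Y \<subseteq> p ` X"
  proof
    fix y assume "y \<in> Y"
    then have "\<exists>xs. set xs \<subseteq> X \<and> successively leX xs \<and> map p xs = [y]"
      using lift[unfolded lifts_chains_def, rule_format, of "[y]"] by simp
    then show "y \<in> p ` X"
      by (auto simp: map_eq_Cons_conv)
  qed
  with assms lift show "strong_quotient_map X leX Y leY p"
    unfolding strong_quotient_map_conv_lifts_chains by blast
qed (simp add: strong_quotient_map_conv_lifts_chains)

definition lifts_decompositions ::
  "'a::real_vector set \<Rightarrow> 'b::real_vector set \<Rightarrow> ('a \<Rightarrow> 'b) \<Rightarrow> 'a \<Rightarrow> bool" where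
  "lifts_decompositions D C p u \<longleftrightarrow>
     (\<forall>n bs. ensemble C (p u) n bs \<longrightarrow>
        (\<exists>x. (\<forall>i<n. x i \<in> order_interval D 0 u) \<and> sum x {..<n} = u \<and> (\<forall>i<n. p (x i) = bs i)))"

locale positive_linear_map =
  fixes D :: "'a::real_vector set" and C :: "'b::real_vector set" and p :: "'a \<Rightarrow> 'b"
  assumes convex_cone_dom: "convex_cone D"
    and convex_cone_codom: "convex_cone C"
    and linear_map: "linear p"
    and positive: "\<And>a. a \<in> D \<Longrightarrow> p a \<in> C"
begin

lemma cone_le_map: "cone_le D a b \<Longrightarrow> cone_le C (p a) (p b)"
  using positive by (simp add: cone_le_def linear_diff[OF linear_map, symmetric])

lemma image_order_interval: "p ` order_interval D 0 u \<subseteq> order_interval C 0 (p u)"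
  using positive cone_le_map by (auto simp: order_interval_def cone_le_def linear_0[OF linear_map])

lemma lifts_chains_if_lifts_decompositions:
  assumes "u \<in> D" "lifts_decompositions D C p u"
  shows "lifts_chains (order_interval D 0 u) (cone_le D) (order_interval C 0 (p u)) (cone_le C) p"
  unfolding lifts_chains_def
proof (intro allI impI, elim conjE)
  fix ys assume ys: "set ys \<subseteq> order_interval C 0 (p u)" "successively (cone_le C) ys"
  define m where "m = length ys"
  have "ensemble C (p u) (Suc m) (chain_increments ys (p u))"
    using chain_increments_mem[OF ys positive[OF assms(1)]] sum_chain_increments[of "Suc m" ys]
    by (simp add: ensemble_def m_def nth_append)
  then obtain x where x: "\<forall>i<Suc m. x i \<in> order_interval D 0 u" "sum x {..<Suc m} = u"
      "\<forall>i<Suc m. p (x i) = chain_increments ys (p u) i"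
    using assms(2) unfolding lifts_decompositions_def by blast
  have "x i \<in> D" if "i < Suc m" for i
    using x(1) that by (simp add: order_interval_def)
  then have "set (partial_sums x m) \<subseteq> order_interval D 0 u"
      "successively (cone_le D) (partial_sums x m)"
    using partial_sums_chain[OF convex_cone_dom, of m x] x(2) by simp_all
  moreover have "map p (partial_sums x m) = ys"
  proof -
    have "map p (partial_sums x m) = partial_sums (chain_increments ys (p u)) m"
      using x(3) unfolding map_linear_partial_sums[OF linear_map] by (intro partial_sums_cong) simp
    then show ?thesis
      by (simp add: m_def partial_sums_chain_increments)
  qed
  ultimately show "\<exists>xs. set xs \<subseteq> order_interval D 0 u \<and> successively (cone_le D) xs \<and> map p xs = ys"
    by blast
qed

text \<open>The hypothesis p u \<noteq> 0 excludes the empty ensemble: lifting it would force u = 0.\<close>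

lemma lifts_decompositions_if_lifts_chains:
  assumes "u \<in> D" "p u \<noteq> 0"
    and lift: "lifts_chains (order_interval D 0 u) (cone_le D) (order_interval C 0 (p u)) (cone_le C) p"
  shows "lifts_decompositions D C p u"
  unfolding lifts_decompositions_def
proof (intro allI impI)
  fix n bs assume ens: "ensemble C (p u) n bs"
  then obtain m where n: "n = Suc m"
    using assms(2) by (cases n) (auto simp: ensemble_def)
  have bs: "\<And>i. i < Suc m \<Longrightarrow> bs i \<in> C" "sum bs {..<Suc m} = p u"
    using ens n by (auto simp: ensemble_def)
  have "set (partial_sums bs m) \<subseteq> order_interval C 0 (p u)"
      "successively (cone_le C) (partial_sums bs m)"
    using partial_sums_chain[OF convex_cone_codom, of m bs] bs by simp_all
  then obtain xs where xs: "set xs \<subseteq> order_interval D 0 u" "successively (cone_le D) xs"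
      "map p xs = partial_sums bs m"
    using lift unfolding lifts_chains_def by blast
  have len: "length xs = m"
    using arg_cong[OF xs(3), of length] by simp
  define x where "x = chain_increments xs u"
  have xD: "x i \<in> D" if "i < Suc m" for i
    using chain_increments_mem[OF xs(1,2) assms(1)] len that by (simp add: x_def)
  have sum_x: "sum x {..<Suc m} = u"
    using sum_chain_increments[of "Suc m" xs] len by (simp add: x_def nth_append)
  have "p (x i) = bs i" if "i < Suc m" for i
  proof -
    have "p (x i) = chain_increments (partial_sums bs m) (p u) i"
      using linear_chain_increments[OF linear_map] xs(3) len that by (simp add: x_def)
    also have "\<dots> = bs i"
      using chain_increments_partial_sums[OF that, of bs] unfolding bs(2) .
    finally show ?thesis .
  qed
  then show "\<exists>x. (\<forall>i<n. x i \<in> order_interval D 0 u) \<and> sum x {..<n} = u \<and> (\<forall>i<n. p (x i) = bs i)"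
    using summand_mem_order_interval[OF convex_cone_dom xD sum_x] sum_x n by blast
qed

lemma strong_quotient_map_iff_lifts_decompositions:
  assumes "u \<in> D" "p u \<noteq> 0"
  shows "strong_quotient_map (order_interval D 0 u) (cone_le D) (order_interval C 0 (p u)) (cone_le C) p
    \<longleftrightarrow> lifts_decompositions D C p u"
proof -
  have "strong_quotient_map (order_interval D 0 u) (cone_le D) (order_interval C 0 (p u)) (cone_le C) p
    \<longleftrightarrow> lifts_chains (order_interval D 0 u) (cone_le D) (order_interval C 0 (p u)) (cone_le C) p"
    using image_order_interval cone_le_map by (intro strong_quotient_map_iff_lifts_chains) auto
  then show ?thesis
    using lifts_chains_if_lifts_decompositions lifts_decompositions_if_lifts_chains assms by blast
qed

end

lemma steering_iff_lifts_decompositions: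
  "steering Ap uA Bp \<omega> \<longleftrightarrow> lifts_decompositions (dual_cone Ap) Bp (omega_hat \<omega>) uA"
  by (simp add: steering_def lifts_decompositions_def observable_def marginal_B_def)

theorem theorem5p4:
  fixes Ap :: "'a::euclidean_space set" and uA :: 'a
    and Bp :: "'b::euclidean_space set" and uB :: 'b
    and \<omega> :: "'a \<Rightarrow> 'b \<Rightarrow> real"
  assumes "abstract_state_space Ap uA"
    and "abstract_state_space Bp uB"
    and "bipartite_state Ap uA Bp uB \<omega>"
  shows "steering Ap uA Bp \<omega> \<longleftrightarrow>
    strong_quotient_map
      (order_interval (dual_cone Ap) 0 uA) (cone_le (dual_cone Ap))
      (order_interval Bp 0 (marginal_B \<omega> uA)) (cone_le Bp)
      (omega_hat \<omega>)"
proof -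
  have tensor: "\<omega> \<in> max_tensor Ap Bp" and normalized: "\<omega> uA uB = 1"
    using assms(3) by (auto simp: bipartite_state_def)
  then have bilinear: "bilinear \<omega>"
    by (simp add: max_tensor_def)
  interpret positive_linear_map "dual_cone Ap" Bp "omega_hat \<omega>"
    using assms(2) tensor linear_omega_hat[OF bilinear]
    by (intro positive_linear_map.intro)
      (auto simp: abstract_state_space_def convex_cone_dual_cone omega_hat_mem_cone)
  have "uA \<in> dual_cone Ap"
    using assms(1) interior_subset by (auto simp: abstract_state_space_def)
  moreover have "omega_hat \<omega> uA \<noteq> 0"
    using inner_omega_hat[OF bilinear, of uA uB] normalized by auto
  ultimately show ?thesis
    unfolding steering_iff_lifts_decompositions marginal_B_def
    by (simp add: strong_quotient_map_iff_lifts_decompositions)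
qed

end
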